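(* Let $G=(V,E)$ be a connected simple graph with $n=|V|\ge 2$ vertices and let $\lambda_2(G)$ be the second smallest eigenvalue of its Laplacian. For vertices $u,v$ let $\mathbb{P}_{uv}=\{P^{(1)}_{uv},\dots,P^{(n_{uv})}_{uv}\}$ be the set of all shortest paths from $u$ to $v$ (so $n_{uv}=|\mathbb{P}_{uv}|\ge1$), and let $d(u,v)$ be their common length. Let $\alpha$ be a path weighting strategy, i.e. for every ordered pair $(u,v)$ a vector $\alpha_{uv}=(\alpha^{(1)}_{uv},\dots,\alpha^{(n_{uv})}_{uv})$ with $\alpha^{(q)}_{uv}\ge 0$ and $\sum_{q=1}^{n_{uv}}\alpha^{(q)}_{uv}=1$. For each edge $k\in E$ define the extended connection-graph-stability score $$C_k(\alpha)=\frac12\sum_{u\in V}\sum_{v\in V} d(u,v)\sum_{q=1}^{n_{uv}}\varphi^{(q)}_{uv}(k)\,\alpha^{(q)}_{uv},\qquad \varphi^{(q)}_{uv}(k)=\begin{cases}1 & k\in P^{(q)}_{uv},\\ 0&\text{otherwise,}\end{cases}$$ and let $C_{\max}(\alpha)=\max_{k\in E}C_k(\alpha)$. Then for every path weighting strategy $\alpha$, $$\lambda_2(G)\ \ge\ \frac{n}{C_{\max}(\alpha)}.$$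
   Context: The Laplacian of $G$ is $L=D-A$ with $A$ the $0/1$ adjacency matrix and $D$ the diagonal degree matrix; eigenvalues $0=\lambda_1\le\lambda_2\le\dots\le\lambda_n$. The length of a path is its number of edges. For $u=v$ the only shortest path is the trivial one of length $0$, contributing nothing. *)

theory Defs
  imports "Jordan_Normal_Form.Char_Poly" "HOL-Computational_Algebra.Polynomial" "HOL-Library.Multiset"
begin

definition simple_graph :: "nat \<Rightarrow> nat set set \<Rightarrow> bool" where
  "simple_graph n E \<longleftrightarrow> (\<forall>e\<in>E. \<exists>a b. e = {a, b} \<and> a \<noteq> b \<and> a < n \<and> b < n)"

definition adj_matrix :: "nat \<Rightarrow> nat set set \<Rightarrow> real mat" where
  "adj_matrix n E = mat n n (\<lambda>(i, j). if {i, j} \<in> E then 1 else 0)"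

definition degree :: "nat \<Rightarrow> nat set set \<Rightarrow> nat \<Rightarrow> nat" where
  "degree n E i = card {j. j < n \<and> {i, j} \<in> E}"

definition deg_matrix :: "nat \<Rightarrow> nat set set \<Rightarrow> real mat" where
  "deg_matrix n E = mat n n (\<lambda>(i, j). if i = j then real (degree n E i) else 0)"

definition laplacian :: "nat \<Rightarrow> nat set set \<Rightarrow> real mat" where
  "laplacian n E = deg_matrix n E - adj_matrix n E"

definition lap_eigenvalues :: "nat \<Rightarrow> nat set set \<Rightarrow> real list" where
  "lap_eigenvalues n E = sorted_list_of_multiset (proots (char_poly (laplacian n E)))"

definition lambda2 :: "nat \<Rightarrow> nat set set \<Rightarrow> real" where
  "lambda2 n E = lap_eigenvalues n E ! 1"

text \<open>A path is a nonempty list of distinct vertices with consecutive vertices adjacent.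
  Its length is the number of edges, length p - 1.\<close>
definition is_path :: "nat \<Rightarrow> nat set set \<Rightarrow> nat list \<Rightarrow> bool" where
  "is_path n E p \<longleftrightarrow> p \<noteq> [] \<and> distinct p \<and> set p \<subseteq> {0..<n} \<and>
     (\<forall>i. i + 1 < length p \<longrightarrow> {p ! i, p ! (i + 1)} \<in> E)"

definition path_from :: "nat \<Rightarrow> nat set set \<Rightarrow> nat \<Rightarrow> nat \<Rightarrow> nat list \<Rightarrow> bool" where
  "path_from n E u v p \<longleftrightarrow> is_path n E p \<and> hd p = u \<and> last p = v"

definition connected_graph :: "nat \<Rightarrow> nat set set \<Rightarrow> bool" where
  "connected_graph n E \<longleftrightarrow> (\<forall>u<n. \<forall>v<n. \<exists>p. path_from n E u v p)"

definition path_edges :: "nat list \<Rightarrow> nat set set" where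
  "path_edges p = {{p ! i, p ! (i + 1)} | i. i + 1 < length p}"

definition shortest_paths :: "nat \<Rightarrow> nat set set \<Rightarrow> nat \<Rightarrow> nat \<Rightarrow> nat list set" where
  "shortest_paths n E u v =
     {p. path_from n E u v p \<and> (\<forall>p'. path_from n E u v p' \<longrightarrow> length p \<le> length p')}"

definition dist :: "nat \<Rightarrow> nat set set \<Rightarrow> nat \<Rightarrow> nat \<Rightarrow> nat" where
  "dist n E u v = (LEAST k. \<exists>p. path_from n E u v p \<and> length p = k + 1)"

text \<open>Path weighting strategy: for every ordered pair (u,v) a probability vector on the
  shortest u-v paths (values outside the shortest paths are irrelevant).\<close>
definition path_weighting :: "nat \<Rightarrow> nat set set \<Rightarrow> (nat \<Rightarrow> nat \<Rightarrow> nat list \<Rightarrow> real) \<Rightarrow> bool" where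
  "path_weighting n E \<alpha> \<longleftrightarrow>
     (\<forall>u<n. \<forall>v<n. (\<forall>p\<in>shortest_paths n E u v. \<alpha> u v p \<ge> 0) \<and>
                  (\<Sum>p\<in>shortest_paths n E u v. \<alpha> u v p) = 1)"

definition cgs_score :: "nat \<Rightarrow> nat set set \<Rightarrow> (nat \<Rightarrow> nat \<Rightarrow> nat list \<Rightarrow> real) \<Rightarrow> nat set \<Rightarrow> real" where
  "cgs_score n E \<alpha> k = 1/2 * (\<Sum>u<n. \<Sum>v<n. real (dist n E u v) *
      (\<Sum>p\<in>shortest_paths n E u v. (if k \<in> path_edges p then 1 else 0) * \<alpha> u v p))"

definition cgs_max :: "nat \<Rightarrow> nat set set \<Rightarrow> (nat \<Rightarrow> nat \<Rightarrow> nat list \<Rightarrow> real) \<Rightarrow> real" where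
  "cgs_max n E \<alpha> = Max (cgs_score n E \<alpha> ` E)"

end

theory Submission
  imports Defs "HOL-Computational_Algebra.Fundamental_Theorem_Algebra"
begin

(* For a vector x write the energy of an edge {a,b} as (x a - x b)^2.
   Along a shortest u-v path of length d(u,v), Cauchy-Schwarz bounds (x u - x v)^2 by
   d(u,v) times the energy of the path; averaging over the shortest paths with the weights
   alpha_uv and summing over all ordered pairs (u,v) gives
       n |x|^2 - (sum x)^2  =  1/2 sum_{u,v} (x u - x v)^2  <=  C_max * x^T L x,
   because each edge k collects exactly the load 2 C_k(alpha).

   If a real symmetric matrix L has zero row sums and satisfies
   n |x|^2 - (sum x)^2 <= K x^T L x for all x (K > 0), then the shifted matrix
   L + (1/K) J has quadratic form >= (n/K)|x|^2, so all its eigenvalues are >= n/K.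
   A determinant computation shows that this shift replaces the eigenvalue 0 of L
   (eigenvector 1) by n/K and keeps all other eigenvalues; hence at most one eigenvalue
   of L lies below n/K and the second smallest one is >= n/K. *)

lemma real_rooted_poly_size_proots:
  fixes q :: "real poly"
  assumes "q \<noteq> 0" "\<And>z. poly (map_poly complex_of_real q) z = 0 \<Longrightarrow> z \<in> \<real>"
  shows "size (proots q) = Polynomial.degree q"
  using assms
proof (induction "Polynomial.degree q" arbitrary: q)
  case 0
  then obtain a where "q = [:a:]" by (metis degree_eq_zeroE)
  then show ?case using 0 by simp
next
  case (Suc d)
  let ?qc = "map_poly complex_of_real q"
  have "Polynomial.degree ?qc = Suc d" using Suc.hyps(2) by simp
  then have "size (proots ?qc) > 0" using size_proots_complex by simp
  then obtain z where "z \<in># proots ?qc" by (metis multiset_nonemptyE size_empty less_irrefl)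
  then have "poly ?qc z = 0" using Suc.prems by simp
  moreover then obtain r where "z = of_real r" using Suc.prems by (auto elim: Reals_cases)
  ultimately have "poly q r = 0" by (simp add: of_real_hom.poly_map_poly)
  then obtain q' where q: "q = [:-r,1:] * q'" using poly_eq_0_iff_dvd by (metis dvdE)
  have q'0: "q' \<noteq> 0" using q Suc.prems by auto
  have "Polynomial.degree q = 1 + Polynomial.degree q'" unfolding q
    by (subst degree_mult_eq; simp add: q'0)
  then have dq': "Polynomial.degree q' = d" using Suc.hyps(2) by simp
  have "map_poly complex_of_real q = [:- of_real r, 1:] * map_poly complex_of_real q'"
  proof -
    interpret m: map_poly_comm_ring_hom "complex_of_real" ..
    show ?thesis unfolding q m.hom_mult by simp
  qed
  then have "\<And>z. poly (map_poly complex_of_real q') z = 0 \<Longrightarrow> z \<in> \<real>"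
    using Suc.prems(2) by (metis mult_zero_right poly_mult)
  then have "size (proots q') = d" using Suc.hyps(1)[of q'] dq' q'0 by simp
  moreover have "proots q = {#r#} + proots q'" unfolding q using q'0
    by (subst proots_mult) auto
  ultimately show ?case using Suc.hyps(2) by simp
qed

lemma symmetric_eigenvalue_ge:
  fixes B :: "real mat"
  assumes B: "B \<in> carrier_mat n n" and sym: "\<And>i j. i<n \<Longrightarrow> j<n \<Longrightarrow> B$$(i,j) = B$$(j,i)"
   and form: "\<And>x. c * (\<Sum>i<n. (x i)^2) \<le> (\<Sum>i<n. \<Sum>j<n. B$$(i,j) * x i * x j)"
   and root: "poly (char_poly (map_mat complex_of_real B)) z = 0"
  shows "z \<in> \<real> \<and> Re z \<ge> c"
proof -
  let ?A = "map_mat complex_of_real B"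
  have A: "?A \<in> carrier_mat n n" using B by simp
  have "eigenvalue ?A z" using eigenvalue_root_char_poly[OF A] root by simp
  then obtain v where "eigenvector ?A v z" unfolding eigenvalue_def by blast
  then have v: "v \<in> carrier_vec n" "v \<noteq> 0\<^sub>v n" "?A *\<^sub>v v = z \<cdot>\<^sub>v v"
    unfolding eigenvector_def using A by auto
  have ev: "(\<Sum>j<n. of_real (B$$(i,j)) * v$j) = z * v$i" if i: "i<n" for i
  proof -
    have "(?A *\<^sub>v v) $ i = (z \<cdot>\<^sub>v v) $ i" using v(3) by simp
    then show ?thesis using i B v(1) by (simp add: scalar_prod_def lessThan_atLeast0)
  qed
  text \<open>Split v into real and imaginary parts a, b and evaluate v* A v in two ways.\<close>
  define a where "a i = Re (v$i)" for i
  define b where "b i = Im (v$i)" for i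
  define S where "S = (\<Sum>i<n. cnj(v$i) * (\<Sum>j<n. of_real(B$$(i,j))*v$j))"
  define N where "N = (\<Sum>i<n. (a i)^2 + (b i)^2)"
  have S_eigen: "S = z * of_real N"
  proof -
    have "S = (\<Sum>i<n. z * (cnj(v$i) * v$i))" unfolding S_def using ev by (simp add: ac_simps)
    also have "\<dots> = z * (\<Sum>i<n. of_real ((a i)^2 + (b i)^2))"
      by (simp add: sum_distrib_left a_def b_def complex_mult_cnj mult.commute)
    finally show ?thesis unfolding N_def by simp
  qed
  have ReS: "Re S = (\<Sum>i<n. \<Sum>j<n. B$$(i,j) * a i * a j) + (\<Sum>i<n. \<Sum>j<n. B$$(i,j) * b i * b j)"
    unfolding S_def a_def b_def by (simp add: sum_distrib_left sum.distrib[symmetric] algebra_simps)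
  have "Im S = (\<Sum>i<n. \<Sum>j<n. B$$(i,j) * a i * b j) - (\<Sum>i<n. \<Sum>j<n. B$$(i,j) * b i * a j)"
    unfolding S_def a_def b_def by (simp add: sum_distrib_left sum_subtractf[symmetric] algebra_simps)
  also have "(\<Sum>i<n. \<Sum>j<n. B$$(i,j) * b i * a j) = (\<Sum>i<n. \<Sum>j<n. B$$(i,j) * a i * b j)"
    by (subst sum.swap) (simp add: sym mult_ac)
  finally have ImS: "Im S = 0" by simp
  obtain i where i: "i < n" "v$i \<noteq> 0" using v(1,2) by (metis eq_vecI carrier_vecD index_zero_vec)
  have "(a i)^2 + (b i)^2 > 0" using i(2) unfolding a_def b_def
    by (metis complex_eq_iff zero_complex.simps sum_power2_gt_zero_iff)
  then have N_pos: "N > 0" unfolding N_def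
    by (intro sum_pos2[of _ i]) (use i in auto)
  have "Im z * N = 0" using ImS S_eigen by simp
  then have real: "Im z = 0" using N_pos by simp
  have "Re z * N = Re S" using S_eigen by simp
  also have "\<dots> \<ge> c * (\<Sum>i<n. (a i)^2) + c * (\<Sum>i<n. (b i)^2)" unfolding ReS
    using form[of a] form[of b] by (simp add: mult_ac)
  finally have "c * N \<le> Re z * N" unfolding N_def by (simp add: sum.distrib distrib_left)
  then have "c \<le> Re z" using N_pos by simp
  then show ?thesis using real by (simp add: complex_is_Real_iff)
qed

text \<open>Elementary column operations used to compare the characteristic polynomials of L and of
  the rank-one shift L + sJ.  Right multiplication by add_cols_to_first replaces the first
  column by the sum of all columns; right multiplication by first_row_update t adds
  t j times the first column to column j (and scales the first column by 1 + t 0).\<close>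
definition add_cols_to_first :: "nat \<Rightarrow> 'a::comm_ring_1 mat" where
  "add_cols_to_first n = mat n n (\<lambda>(i,j). if i=j \<or> j=0 then 1 else 0)"

definition first_row_update :: "nat \<Rightarrow> (nat \<Rightarrow> 'a::comm_ring_1) \<Rightarrow> 'a mat" where
  "first_row_update n t = mat n n (\<lambda>(i,j). (if i=j then 1 else 0) + (if i=0 then t j else 0))"

lemma add_cols_to_first_carrier: "add_cols_to_first n \<in> carrier_mat n n"
  unfolding add_cols_to_first_def by simp

lemma first_row_update_carrier: "first_row_update n t \<in> carrier_mat n n"
  unfolding first_row_update_def by simp

lemma mult_add_cols_to_first:
  fixes X :: "'a::comm_ring_1 mat"
  assumes X: "X \<in> carrier_mat n n" and i: "i < n" and j: "j < n"
  shows "(X * add_cols_to_first n) $$ (i,j) = (if j = 0 then (\<Sum>l<n. X$$(i,l)) else X$$(i,j))"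
proof -
  have "(X * add_cols_to_first n) $$ (i,j) = (\<Sum>l<n. X$$(i,l) * (if l=j \<or> j=0 then 1 else 0))"
    using X i j by (simp add: add_cols_to_first_def scalar_prod_def lessThan_atLeast0)
  also have "\<dots> = (if j = 0 then (\<Sum>l<n. X$$(i,l)) else X$$(i,j))"
    using j by (cases "j = 0") (simp_all add: if_distrib cong: if_cong)
  finally show ?thesis .
qed

lemma mult_first_row_update:
  fixes X :: "'a::comm_ring_1 mat"
  assumes X: "X \<in> carrier_mat n n" and i: "i < n" and j: "j < n"
  shows "(X * first_row_update n t) $$ (i,j) = X$$(i,j) + X$$(i,0) * t j"
proof -
  have "(X * first_row_update n t) $$ (i,j)
     = (\<Sum>l<n. X$$(i,l) * ((if l=j then 1 else 0) + (if l=0 then t j else 0)))"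
    using X i j by (simp add: first_row_update_def scalar_prod_def lessThan_atLeast0)
  also have "\<dots> = (\<Sum>l<n. X$$(i,l) * (if l=j then 1 else 0)) + (\<Sum>l<n. X$$(i,l) * (if l=0 then t j else 0))"
    by (simp add: distrib_left sum.distrib)
  also have "\<dots> = X$$(i,j) + X$$(i,0) * t j"
    using i j by (simp add: if_distrib cong: if_cong)
  finally show ?thesis .
qed

lemma det_add_cols_to_first: "det (add_cols_to_first n :: 'a::comm_ring_1 mat) = 1"
proof -
  have "det (add_cols_to_first n :: 'a mat) = prod_list (diag_mat (add_cols_to_first n :: 'a mat))"
    by (rule det_lower_triangular[of n]) (auto simp: add_cols_to_first_def)
  also have "diag_mat (add_cols_to_first n :: 'a mat) = map (\<lambda>i. 1) [0..<n]"
    unfolding diag_mat_def add_cols_to_first_def by auto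
  finally show ?thesis by (simp add: prod_list_replicate map_replicate_const)
qed

lemma det_first_row_update:
  assumes n: "0 < n"
  shows "det (first_row_update n t :: 'a::comm_ring_1 mat) = 1 + t 0"
proof -
  let ?T = "first_row_update n t :: 'a mat"
  have "det ?T = prod_list (diag_mat ?T)"
    by (rule det_upper_triangular[of _ n]) (auto simp: upper_triangular_def first_row_update_def)
  also have "diag_mat ?T = (1 + t 0) # map (\<lambda>i. 1) [1..<n]"
    unfolding diag_mat_def first_row_update_def using n by (auto simp: upt_conv_Cons)
  finally show ?thesis by (simp add: map_replicate_const)
qed

text \<open>For k = 0 both sides vanish because
  N annihilates the all-ones vector; otherwise, after summing all columns into the first
  one, the shifted matrix differs from N only by column operations with that constant
  first column.\<close>
lemma det_constant_shift:
  fixes N :: "real mat"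
  assumes N: "N \<in> carrier_mat n n" and rowN: "\<And>i. i<n \<Longrightarrow> (\<Sum>l<n. N$$(i,l)) = k" and n: "n>0"
  shows "det (mat n n (\<lambda>(i,j). N$$(i,j) - s)) * k = det N * (k - s * n)"
proof -
  define M where "M = mat n n (\<lambda>(i,j). N$$(i,j) - s)"
  have M: "M \<in> carrier_mat n n" unfolding M_def by simp
  have rowM: "(\<Sum>l<n. M$$(i,l)) = k - s * n" if "i<n" for i
  proof -
    have "(\<Sum>l<n. M$$(i,l)) = (\<Sum>l<n. N$$(i,l)) - (\<Sum>l<n. s)"
      unfolding M_def using that by (simp add: sum_subtractf)
    then show ?thesis using rowN[OF that] by simp
  qed
  show ?thesis
  proof (cases "k = 0")
    case True
    let ?one = "vec n (\<lambda>_. 1::real)"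
    have "N *\<^sub>v ?one = 0\<^sub>v n"
    proof (rule eq_vecI)
      fix i assume i: "i < dim_vec (0\<^sub>v n :: real vec)"
      have "(N *\<^sub>v ?one) $ i = (\<Sum>l<n. N$$(i,l))"
        using i N by (simp add: scalar_prod_def lessThan_atLeast0)
      also have "\<dots> = 0" using rowN i True by simp
      finally show "(N *\<^sub>v ?one) $ i = 0\<^sub>v n $ i" using i by simp
    qed (use N in simp)
    moreover have "?one \<noteq> 0\<^sub>v n" using n by (metis index_vec index_zero_vec(1) zero_neq_one)
    moreover have "?one \<in> carrier_vec n" by simp
    ultimately have "det N = 0" using det_0_iff_vec_prod_zero[OF N] by blast
    then show ?thesis using True by simp
  next
    case False
    define P where "P = (add_cols_to_first n :: real mat)"
    define t where "t (j::nat) = (if j = 0 then - (s*n)/k else - s/k)" for j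
    define T where "T = first_row_update n t"
    have P: "P \<in> carrier_mat n n" and T: "T \<in> carrier_mat n n"
      unfolding P_def T_def by (auto intro: add_cols_to_first_carrier first_row_update_carrier)
    have NP: "N * P \<in> carrier_mat n n" using N P by simp
    have MP: "M * P = (N * P) * T"
    proof (rule eq_matI)
      fix i j assume ij: "i < dim_row ((N * P) * T)" "j < dim_col ((N * P) * T)"
      then have i: "i < n" and j: "j < n" using N P T by auto
      have "((N * P) * T) $$ (i,j) = (N*P)$$(i,j) + (N*P)$$(i,0) * t j"
        unfolding T_def by (rule mult_first_row_update[OF NP i j])
      also have "\<dots> = (M * P) $$ (i,j)"
        unfolding P_def mult_add_cols_to_first[OF N i j] mult_add_cols_to_first[OF N i n]
          mult_add_cols_to_first[OF M i j]
        using rowN[OF i] rowM[OF i] i j False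
        by (auto simp: t_def M_def field_simps)
      finally show "(M * P) $$ (i,j) = ((N * P) * T) $$ (i,j)" by simp
    qed (use N M P T in auto)
    have "det M = det (M * P)" using det_mult[OF M P] by (simp add: P_def det_add_cols_to_first)
    also have "\<dots> = det N * det T"
      unfolding MP using det_mult[OF N P] det_mult[OF NP T] by (simp add: P_def det_add_cols_to_first)
    also have "\<dots> = det N * (1 - s * n / k)"
      unfolding T_def det_first_row_update[OF n] t_def by simp
    finally show ?thesis using False unfolding M_def by (simp add: field_simps)
  qed
qed

lemma char_poly_rank_one_shift:
  fixes L :: "real mat"
  assumes L: "L \<in> carrier_mat n n" and rows: "\<And>i. i<n \<Longrightarrow> (\<Sum>j<n. L$$(i,j)) = 0" and n: "n>0"
  shows "poly (char_poly (mat n n (\<lambda>(i,j). L$$(i,j) + s))) k * k = poly (char_poly L) k * (k - s * n)"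
proof -
  define L' where "L' = mat n n (\<lambda>(i,j). L$$(i,j) + s)"
  have L': "L' \<in> carrier_mat n n" unfolding L'_def by simp
  define N where "N = mat n n (\<lambda>(i,j). (if i=j then k else 0) - L$$(i,j))"
  have N: "N \<in> carrier_mat n n" unfolding N_def by simp
  have pN: "poly (char_poly L) k = det N"
    unfolding char_poly_matrix[OF L] N_def
    by (rule arg_cong[where f=det], rule eq_matI) (use L in \<open>auto simp: char_matrix_def\<close>)
  have pL': "poly (char_poly L') k = det (mat n n (\<lambda>(i,j). N$$(i,j) - s))"
    unfolding char_poly_matrix[OF L'] N_def
    by (rule arg_cong[where f=det], rule eq_matI) (use L in \<open>auto simp: char_matrix_def L'_def\<close>)
  have rowN: "(\<Sum>l<n. N$$(i,l)) = k" if "i<n" for i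
  proof -
    have "(\<Sum>l<n. N$$(i,l)) = (\<Sum>l<n. (if i=l then k else 0)) - (\<Sum>l<n. L$$(i,l))"
      unfolding N_def using that by (simp add: sum_subtractf)
    then show ?thesis using rows[OF that] that by simp
  qed
  show ?thesis
    using det_constant_shift[OF N rowN n, of s] pN pL' unfolding L'_def by simp
qed

lemma rank_one_shift_proots:
  fixes L :: "real mat"
  assumes L: "L \<in> carrier_mat n n" and rows: "\<And>i. i<n \<Longrightarrow> (\<Sum>j<n. L$$(i,j)) = 0" and n: "n>0"
  shows "proots (char_poly (mat n n (\<lambda>(i,j). L$$(i,j) + s))) + {#0#}
       = proots (char_poly L) + {#s * n#}"
proof -
  define q where "q = char_poly (mat n n (\<lambda>(i,j). L$$(i,j) + s))"
  define p where "p = char_poly L"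
  have q0: "q \<noteq> 0"
    unfolding q_def using degree_monic_char_poly[of "mat n n (\<lambda>(i,j). L$$(i,j) + s)" n] by auto
  have p0: "p \<noteq> 0" unfolding p_def using degree_monic_char_poly[OF L] by auto
  have "q * [:0,1:] = p * [:-(s*n),1:]"
  proof (rule poly_eq_poly_eq_iff[THEN iffD1], rule ext)
    fix k
    show "poly (q * [:0,1:]) k = poly (p * [:-(s*n),1:]) k"
      using char_poly_rank_one_shift[OF L rows n, of s k] unfolding q_def p_def
      by (simp add: algebra_simps)
  qed
  moreover have "proots (q * [:0,1:]) = proots q + {#0#}"
    using q0 proots_mult[of q "[:0,1:]"] proots_linear_factor[of "0::real"] by simp
  moreover have "proots (p * [:-(s*n),1:]) = proots p + {#s*n#}"
    using p0 proots_mult[of p "[:-(s*n),1:]"] proots_linear_factor[of "-(s*n)"] by simp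
  ultimately show ?thesis unfolding q_def p_def by metis
qed

lemma second_smallest_ge:
  fixes M :: "'a::linorder multiset"
  assumes size: "size M \<ge> 2" and below: "size (filter_mset (\<lambda>x. x < c) M) \<le> 1"
  shows "c \<le> sorted_list_of_multiset M ! 1"
proof (rule ccontr)
  define xs where "xs = sorted_list_of_multiset M"
  have "length xs = size M" unfolding xs_def by (metis mset_sorted_list_of_multiset size_mset)
  then obtain a b rest where xs: "xs = a # b # rest" using size
    by (metis Suc_le_length_iff numeral_2_eq_2)
  assume "\<not> c \<le> sorted_list_of_multiset M ! 1"
  then have bc: "b < c" using xs unfolding xs_def by simp
  have "a \<le> b" using xs sorted_sorted_list_of_multiset[of M] unfolding xs_def by (metis sorted2)
  then have "length (filter (\<lambda>x. x < c) xs) \<ge> 2" using xs bc by auto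
  moreover have "mset (filter (\<lambda>x. x < c) xs) = filter_mset (\<lambda>x. x < c) M"
    unfolding xs_def by simp
  ultimately show False using below by (metis size_mset le_trans not_less_eq_eq numeral_2_eq_2 One_nat_def)
qed

lemma second_eigenvalue_bound:
  fixes L :: "real mat" and K :: real
  assumes L: "L \<in> carrier_mat n n" and sym: "\<And>i j. i<n \<Longrightarrow> j<n \<Longrightarrow> L$$(i,j) = L$$(j,i)"
   and rows: "\<And>i. i<n \<Longrightarrow> (\<Sum>j<n. L$$(i,j)) = 0" and n: "n \<ge> 2" and K: "K > 0"
   and form: "\<And>x. real n * (\<Sum>i<n. (x i)^2) - (\<Sum>i<n. x i)^2 \<le> K * (\<Sum>i<n. \<Sum>j<n. L$$(i,j) * x i * x j)"
  shows "real n / K \<le> sorted_list_of_multiset (proots (char_poly L)) ! 1"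
proof -
  define c where "c = real n / K"
  define s where "s = 1 / K"
  have c_pos: "c > 0" unfolding c_def using n K by simp
  have sn: "s * n = c" unfolding s_def c_def by simp
  define L' where "L' = mat n n (\<lambda>(i,j). L$$(i,j) + s)"
  have L': "L' \<in> carrier_mat n n" unfolding L'_def by simp
  have sym': "L'$$(i,j) = L'$$(j,i)" if "i<n" "j<n" for i j
    unfolding L'_def using that sym by simp
  have form': "c * (\<Sum>i<n. (x i)^2) \<le> (\<Sum>i<n. \<Sum>j<n. L'$$(i,j) * x i * x j)" for x
  proof -
    have "(\<Sum>i<n. \<Sum>j<n. L'$$(i,j) * x i * x j)
        = (\<Sum>i<n. \<Sum>j<n. L$$(i,j) * x i * x j) + s * (\<Sum>i<n. \<Sum>j<n. x i * x j)"
      unfolding L'_def by (simp add: algebra_simps sum.distrib sum_distrib_left)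
    also have "(\<Sum>i<n. \<Sum>j<n. x i * x j) = (\<Sum>i<n. x i)^2"
      by (simp add: power2_eq_square sum_product)
    finally have eq: "(\<Sum>i<n. \<Sum>j<n. L'$$(i,j) * x i * x j)
        = (\<Sum>i<n. \<Sum>j<n. L$$(i,j) * x i * x j) + s * (\<Sum>i<n. x i)^2" .
    have "c * (\<Sum>i<n. (x i)^2) - s * (\<Sum>i<n. x i)^2
        = (real n * (\<Sum>i<n. (x i)^2) - (\<Sum>i<n. x i)^2) / K"
      unfolding c_def s_def by (simp add: diff_divide_distrib)
    also have "\<dots> \<le> (\<Sum>i<n. \<Sum>j<n. L$$(i,j) * x i * x j)"
      using form[of x] K by (simp add: divide_le_eq mult.commute)
    finally show ?thesis unfolding eq by simp
  qed
  define q where "q = char_poly L'"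
  define p where "p = char_poly L"
  have q0: "q \<noteq> 0" and deg_q: "Polynomial.degree q = n"
    unfolding q_def using degree_monic_char_poly[OF L'] by auto
  have roots_q: "z \<in> \<real> \<and> Re z \<ge> c" if "poly (map_poly complex_of_real q) z = 0" for z
  proof -
    have "char_poly (map_mat complex_of_real L') = map_poly complex_of_real q"
      unfolding q_def using of_real_hom.char_poly_hom[OF L'] by simp
    then have "poly (char_poly (map_mat complex_of_real L')) z = 0" using that by simp
    then show ?thesis using symmetric_eigenvalue_ge[OF L' sym' form'] by blast
  qed
  have size_q: "size (proots q) = n" using real_rooted_poly_size_proots[OF q0] roots_q deg_q by auto
  have q_ge: "r \<ge> c" if "r \<in># proots q" for r
  proof -
    have "poly (map_poly complex_of_real q) (of_real r) = 0"
      using that q0 by (simp add: of_real_hom.poly_map_poly)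
    then show ?thesis using roots_q by fastforce
  qed
  have roots: "proots q + {#0#} = proots p + {#c#}"
    using rank_one_shift_proots[OF L rows, of s] n sn unfolding q_def p_def L'_def by simp
  have "size (proots p) = n" using arg_cong[OF roots, of size] size_q by simp
  moreover have "filter_mset (\<lambda>x. x < c) (proots p) = {#0#}"
  proof -
    have "filter_mset (\<lambda>x. x < c) (proots q + {#0#}) = filter_mset (\<lambda>x. x < c) (proots p + {#c#})"
      using roots by simp
    moreover have "filter_mset (\<lambda>x. x < c) (proots q) = {#}" using q_ge by (auto simp: not_less)
    ultimately show ?thesis using c_pos by simp
  qed
  ultimately show ?thesis
    using second_smallest_ge[of "proots p" c] n unfolding c_def p_def by simp
qed



text \<open>The energy of an edge e = {a,b} under a vertex vector x, namely (x a - x b)^2,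
  written so that it is defined on the unordered edge.\<close>
definition edge_energy :: "(nat \<Rightarrow> real) \<Rightarrow> nat set \<Rightarrow> real" where
  "edge_energy x e = (Max (x ` e) - Min (x ` e))^2"

lemma edge_energy_pair: "edge_energy x {a,b} = (x a - x b)^2"
  unfolding edge_energy_def by (cases "x a \<le> x b") (auto simp: max_def min_def power2_commute)

lemma edge_energy_nonneg: "edge_energy x e \<ge> 0"
  unfolding edge_energy_def by simp

lemma sum_squared_differences:
  fixes y :: "nat \<Rightarrow> real"
  shows "(\<Sum>i\<in>A. \<Sum>j\<in>A. (y i - y j)^2) = 2 * real (card A) * (\<Sum>i\<in>A. (y i)^2) - 2 * (\<Sum>i\<in>A. y i)^2"
proof -
  have "(\<Sum>i\<in>A. \<Sum>j\<in>A. (y i - y j)^2) = (\<Sum>i\<in>A. \<Sum>j\<in>A. (y i)^2 + (y j)^2 - 2 * (y i * y j))"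
    by (simp add: power2_diff mult_ac)
  also have "\<dots> = (\<Sum>i\<in>A. \<Sum>j\<in>A. (y i)^2) + (\<Sum>i\<in>A. \<Sum>j\<in>A. (y j)^2) - 2 * (\<Sum>i\<in>A. \<Sum>j\<in>A. y i * y j)"
    by (simp only: sum.distrib sum_subtractf sum_distrib_left)
  also have "(\<Sum>i\<in>A. \<Sum>j\<in>A. y i * y j) = (\<Sum>i\<in>A. y i)^2"
    by (simp only: sum_product power2_eq_square)
  also have "(\<Sum>i\<in>A. \<Sum>j\<in>A. (y i)^2) = real (card A) * (\<Sum>i\<in>A. (y i)^2)"
    by (simp add: sum_distrib_left mult.commute)
  also have "(\<Sum>i\<in>A. \<Sum>j\<in>A. (y j)^2) = real (card A) * (\<Sum>i\<in>A. (y i)^2)"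
    by simp
  finally show ?thesis by simp
qed

lemma square_of_sum_le:
  fixes y :: "nat \<Rightarrow> real"
  shows "(\<Sum>i<m. y i)^2 \<le> real m * (\<Sum>i<m. (y i)^2)"
proof -
  have "0 \<le> (\<Sum>i<m. \<Sum>j<m. (y i - y j)^2)" by (intro sum_nonneg) simp
  then show ?thesis unfolding sum_squared_differences by simp
qed

lemma simple_graph_edge:
  "simple_graph n E \<Longrightarrow> e \<in> E \<Longrightarrow> \<exists>a b. e = {a,b} \<and> a \<noteq> b \<and> a < n \<and> b < n"
  unfolding simple_graph_def by blast

lemma simple_graph_finite:
  assumes "simple_graph n E" shows "finite E"
proof (rule finite_subset)
  show "E \<subseteq> Pow {0..<n}" using simple_graph_edge[OF assms] by fastforce
qed simp

lemma laplacian_carrier: "laplacian n E \<in> carrier_mat n n"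
  unfolding laplacian_def deg_matrix_def adj_matrix_def by (rule minus_carrier_mat) simp

lemma laplacian_entry: "i < n \<Longrightarrow> j < n \<Longrightarrow> laplacian n E $$ (i,j) =
   (if i = j then real (degree n E i) else 0) - (if {i,j} \<in> E then 1 else 0)"
  unfolding laplacian_def deg_matrix_def adj_matrix_def by simp

lemma degree_as_sum: "real (degree n E i) = (\<Sum>j<n. if {i,j} \<in> E then 1 else 0)"
proof -
  have "{j. j < n \<and> {i,j} \<in> E} = {j\<in>{..<n}. {i,j} \<in> E}" by auto
  then have "real (degree n E i) = (\<Sum>j\<in>{j\<in>{..<n}. {i,j} \<in> E}. 1)" unfolding degree_def by simp
  also have "\<dots> = (\<Sum>j<n. if {i,j} \<in> E then 1 else 0)" by (rule sum.inter_filter) simp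
  finally show ?thesis .
qed

lemma laplacian_symmetric: "i < n \<Longrightarrow> j < n \<Longrightarrow> laplacian n E $$ (i,j) = laplacian n E $$ (j,i)"
  by (simp add: laplacian_entry insert_commute)

lemma laplacian_row_sum:
  assumes i: "i < n"
  shows "(\<Sum>j<n. laplacian n E $$ (i,j)) = 0"
proof -
  have "(\<Sum>j<n. laplacian n E $$ (i,j))
      = (\<Sum>j<n. (if i = j then real (degree n E i) else 0)) - (\<Sum>j<n. if {i,j} \<in> E then 1 else 0)"
    using i by (simp add: laplacian_entry sum_subtractf)
  also have "\<dots> = 0" using i by (simp add: degree_as_sum)
  finally show ?thesis .
qed

lemma count_ordered_pairs:
  fixes a b n :: nat assumes "a \<noteq> b" "a < n" "b < n"
  shows "(\<Sum>i<n. \<Sum>j<n. if {a,b} = {i,j} then 1 else 0::real) = 2"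
proof -
  have "{a,b} = {i,j} \<longleftrightarrow> (i = a \<and> j = b) \<or> (i = b \<and> j = a)" for i j
    by (auto simp: doubleton_eq_iff)
  then have "(\<Sum>j<n. if {a,b} = {i,j} then 1 else 0::real)
      = (\<Sum>j<n. if i = a \<and> j = b then 1 else 0) + (\<Sum>j<n. if i = b \<and> j = a then 1 else 0)" for i
    using assms(1) by (auto simp: sum.distrib[symmetric] intro!: sum.cong)
  also have "\<dots> i = (if i = a then 1 else 0) + (if i = b then 1 else 0)" for i
    using assms by (simp add: sum.If_cases)
  finally show ?thesis using assms by (simp add: sum.distrib)
qed

lemma ordered_pairs_edge_sum:
  assumes sg: "simple_graph n E"
  shows "(\<Sum>i<n. \<Sum>j<n. if {i,j} \<in> E then f {i,j} else 0) = 2 * (\<Sum>e\<in>E. f e :: real)"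
proof -
  have fin: "finite E" by (rule simple_graph_finite[OF sg])
  have "(\<Sum>i<n. \<Sum>j<n. if {i,j} \<in> E then f {i,j} else 0)
      = (\<Sum>i<n. \<Sum>j<n. \<Sum>e\<in>E. if e = {i,j} then f e else 0)"
    by (simp add: sum.delta[OF fin])
  also have "\<dots> = (\<Sum>e\<in>E. \<Sum>i<n. \<Sum>j<n. if e = {i,j} then f e else 0)"
    by (subst sum.swap, subst (2) sum.swap) (rule refl)
  also have "\<dots> = (\<Sum>e\<in>E. 2 * f e)"
  proof (rule sum.cong[OF refl])
    fix e assume "e \<in> E"
    then obtain a b where ab: "e = {a,b}" "a \<noteq> b" "a < n" "b < n"
      using simple_graph_edge[OF sg] by blast
    have "(\<Sum>i<n. \<Sum>j<n. if e = {i,j} then f e else 0)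
        = f e * (\<Sum>i<n. \<Sum>j<n. if {a,b} = {i,j} then 1 else 0)"
      unfolding ab(1) sum_distrib_left by (intro sum.cong refl) simp
    then show "(\<Sum>i<n. \<Sum>j<n. if e = {i,j} then f e else 0) = 2 * f e"
      using count_ordered_pairs[OF ab(2-4)] by simp
  qed
  finally show ?thesis by (simp add: sum_distrib_left)
qed

lemma laplacian_quadratic_form:
  assumes sg: "simple_graph n E"
  shows "(\<Sum>i<n. \<Sum>j<n. laplacian n E $$ (i,j) * x i * x j) = (\<Sum>e\<in>E. edge_energy x e)"
proof -
  define A where "A i j = (if {i,j} \<in> E then 1 else 0::real)" for i j
  define dg where "dg i = real (degree n E i)" for i
  have dgA: "dg i = (\<Sum>j<n. A i j)" for i unfolding dg_def A_def by (rule degree_as_sum)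
  have Asym: "A i j = A j i" for i j unfolding A_def by (simp add: insert_commute)
  have form: "(\<Sum>i<n. \<Sum>j<n. laplacian n E $$ (i,j) * x i * x j)
      = (\<Sum>i<n. dg i * (x i)^2) - (\<Sum>i<n. \<Sum>j<n. A i j * x i * x j)"
  proof -
    have "(\<Sum>i<n. \<Sum>j<n. laplacian n E $$ (i,j) * x i * x j)
        = (\<Sum>i<n. \<Sum>j<n. (if i = j then dg i * x i * x j else 0) - A i j * x i * x j)"
      by (intro sum.cong refl) (simp add: laplacian_entry A_def dg_def algebra_simps)
    then show ?thesis by (simp add: sum_subtractf power2_eq_square mult_ac)
  qed
  text \<open>Each of the two square terms of (x i - x j)^2 contributes the degree-weighted sum.\<close>
  have "(\<Sum>i<n. \<Sum>j<n. A i j * (x i - x j)^2)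
      = (\<Sum>i<n. \<Sum>j<n. A i j * (x i)^2) + (\<Sum>i<n. \<Sum>j<n. A i j * (x j)^2)
        - 2 * (\<Sum>i<n. \<Sum>j<n. A i j * x i * x j)"
  proof -
    have "(\<Sum>i<n. \<Sum>j<n. A i j * (x i - x j)^2)
        = (\<Sum>i<n. \<Sum>j<n. A i j * (x i)^2 + A i j * (x j)^2 - 2 * (A i j * x i * x j))"
      by (intro sum.cong refl) (simp add: power2_diff algebra_simps)
    then show ?thesis by (simp only: sum.distrib sum_subtractf sum_distrib_left)
  qed
  also have "(\<Sum>i<n. \<Sum>j<n. A i j * (x j)^2) = (\<Sum>i<n. \<Sum>j<n. A i j * (x i)^2)"
    by (subst sum.swap) (simp add: Asym)
  also have "(\<Sum>i<n. \<Sum>j<n. A i j * (x i)^2) = (\<Sum>i<n. dg i * (x i)^2)"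
    by (simp add: dgA sum_distrib_right)
  finally have double: "(\<Sum>i<n. \<Sum>j<n. A i j * (x i - x j)^2)
      = 2 * (\<Sum>i<n. \<Sum>j<n. laplacian n E $$ (i,j) * x i * x j)"
    unfolding form by simp
  have "(\<Sum>i<n. \<Sum>j<n. A i j * (x i - x j)^2)
      = (\<Sum>i<n. \<Sum>j<n. if {i,j} \<in> E then edge_energy x {i,j} else 0)"
    by (intro sum.cong refl) (simp add: A_def edge_energy_pair)
  also have "\<dots> = 2 * (\<Sum>e\<in>E. edge_energy x e)"
    by (rule ordered_pairs_edge_sum[OF sg])
  finally show ?thesis using double by simp
qed

lemma shortest_path_length:
  assumes "p \<in> shortest_paths n E u v"
  shows "length p = dist n E u v + 1"
proof -
  have pf: "path_from n E u v p" and min: "\<And>p'. path_from n E u v p' \<Longrightarrow> length p \<le> length p'"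
    using assms unfolding shortest_paths_def by auto
  have ne: "p \<noteq> []" using pf unfolding path_from_def is_path_def by auto
  have "dist n E u v = length p - 1"
    unfolding dist_def
  proof (rule Least_equality)
    show "\<exists>p'. path_from n E u v p' \<and> length p' = length p - 1 + 1" using pf ne by auto
  next
    fix k assume "\<exists>p'. path_from n E u v p' \<and> length p' = k + 1"
    then show "length p - 1 \<le> k" using min by force
  qed
  then show ?thesis using ne by simp
qed

lemma path_edges_subset: "is_path n E p \<Longrightarrow> path_edges p \<subseteq> E"
  unfolding is_path_def path_edges_def by auto

lemma path_edges_inj:
  assumes "distinct p" "length p = m + 1"
  shows "inj_on (\<lambda>i. {p!i, p!Suc i}) {..<m}"
proof (rule inj_onI)
  fix i j assume i: "i \<in> {..<m}" and j: "j \<in> {..<m}" and eq: "{p!i, p!Suc i} = {p!j, p!Suc j}"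
  have index: "\<And>a b. a < length p \<Longrightarrow> b < length p \<Longrightarrow> p!a = p!b \<Longrightarrow> a = b"
    using assms(1) by (simp add: nth_eq_iff_index_eq)
  from eq have "(p!i = p!j \<and> p!Suc i = p!Suc j) \<or> (p!i = p!Suc j \<and> p!Suc i = p!j)"
    by (auto simp: doubleton_eq_iff)
  then show "i = j"
    using index[of i j] index[of i "Suc j"] index[of "Suc i" j] i j assms(2) by auto
qed

text \<open>Key path estimate: along a shortest u-v path, (x u - x v)^2 is at most d(u,v) times
  the energy of the path (telescoping plus Cauchy-Schwarz).\<close>
lemma shortest_path_energy_bound:
  assumes "p \<in> shortest_paths n E u v"
  shows "(x u - x v)^2 \<le> real (dist n E u v) * (\<Sum>e\<in>path_edges p. edge_energy x e)"
proof -
  have "path_from n E u v p" using assms unfolding shortest_paths_def by auto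
  then have ne: "p \<noteq> []" and dp: "distinct p" and hu: "hd p = u" and lv: "last p = v"
    unfolding path_from_def is_path_def by auto
  define m where "m = length p - 1"
  have lp: "length p = m + 1" using ne unfolding m_def by simp
  have dm: "dist n E u v = m" using shortest_path_length[OF assms] lp by simp
  have "path_edges p = (\<lambda>i. {p!i, p!Suc i}) ` {..<m}"
    unfolding path_edges_def lp by auto
  then have energy: "(\<Sum>e\<in>path_edges p. edge_energy x e) = (\<Sum>i<m. (x (p!i) - x (p!Suc i))^2)"
    by (simp add: sum.reindex[OF path_edges_inj[OF dp lp]] edge_energy_pair)
  have "(\<Sum>i<m. x (p!i) - x (p!Suc i)) = x (p!0) - x (p!m)"
    by (induction m) auto
  moreover have "p!0 = u" using hu ne by (simp add: hd_conv_nth)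
  moreover have "p!m = v" using lv ne lp by (simp add: last_conv_nth)
  ultimately have "x u - x v = (\<Sum>i<m. x (p!i) - x (p!Suc i))" by simp
  then show ?thesis unfolding energy dm by (simp add: square_of_sum_le)
qed

definition pair_load :: "nat \<Rightarrow> nat set set \<Rightarrow> (nat \<Rightarrow> nat \<Rightarrow> nat list \<Rightarrow> real) \<Rightarrow> nat set \<Rightarrow> nat \<Rightarrow> nat \<Rightarrow> real" where
  "pair_load n E \<alpha> k u v = real (dist n E u v) *
     (\<Sum>p\<in>shortest_paths n E u v. (if k \<in> path_edges p then 1 else 0) * \<alpha> u v p)"

lemma cgs_score_pair_load: "cgs_score n E \<alpha> k = 1/2 * (\<Sum>u<n. \<Sum>v<n. pair_load n E \<alpha> k u v)"
  unfolding cgs_score_def pair_load_def by simp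

text \<open>Averaging the path estimate with the weights alpha_uv bounds (x u - x v)^2 by the
  edge energies weighted with the loads of (u,v).\<close>
lemma pair_difference_bound:
  assumes sg: "simple_graph n E" and pw: "path_weighting n E \<alpha>" and u: "u < n" and v: "v < n"
  shows "(x u - x v)^2 \<le> (\<Sum>e\<in>E. edge_energy x e * pair_load n E \<alpha> e u v)"
proof -
  let ?SP = "shortest_paths n E u v" and ?d = "real (dist n E u v)"
  let ?through = "\<lambda>e p. if e \<in> path_edges p then 1 else 0 :: real"
  have weights: "(\<Sum>p\<in>?SP. \<alpha> u v p) = 1" "\<And>p. p \<in> ?SP \<Longrightarrow> \<alpha> u v p \<ge> 0"
    using pw u v unfolding path_weighting_def by auto
  have path_energy: "(\<Sum>e\<in>path_edges p. edge_energy x e) = (\<Sum>e\<in>E. ?through e p * edge_energy x e)"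
    if "p \<in> ?SP" for p
  proof -
    have "path_edges p \<subseteq> E"
      using that path_edges_subset unfolding shortest_paths_def path_from_def by blast
    then have "E \<inter> path_edges p = path_edges p" by blast
    then show ?thesis using sum.inter_restrict[OF simple_graph_finite[OF sg], of "edge_energy x" "path_edges p"]
      by (simp add: if_distrib if_distribR cong: if_cong)
  qed
  have "(x u - x v)^2 = (\<Sum>p\<in>?SP. \<alpha> u v p * (x u - x v)^2)"
    by (simp add: sum_distrib_right[symmetric] weights(1))
  also have "\<dots> \<le> (\<Sum>p\<in>?SP. \<alpha> u v p * (?d * (\<Sum>e\<in>path_edges p. edge_energy x e)))"
    by (intro sum_mono mult_left_mono weights(2) shortest_path_energy_bound)
  also have "\<dots> = (\<Sum>p\<in>?SP. \<Sum>e\<in>E. edge_energy x e * (?d * (?through e p * \<alpha> u v p)))"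
    by (simp add: path_energy sum_distrib_left mult_ac)
  also have "\<dots> = (\<Sum>e\<in>E. edge_energy x e * pair_load n E \<alpha> e u v)"
    by (subst sum.swap) (simp add: pair_load_def sum_distrib_left)
  finally show ?thesis .
qed

lemma cgs_energy_inequality:
  assumes sg: "simple_graph n E" and pw: "path_weighting n E \<alpha>"
  shows "real n * (\<Sum>i<n. (x i)^2) - (\<Sum>i<n. x i)^2 \<le> cgs_max n E \<alpha> * (\<Sum>e\<in>E. edge_energy x e)"
proof -
  have score_le: "cgs_score n E \<alpha> e \<le> cgs_max n E \<alpha>" if "e \<in> E" for e
    unfolding cgs_max_def using simple_graph_finite[OF sg] that by simp
  have "2 * (real n * (\<Sum>i<n. (x i)^2) - (\<Sum>i<n. x i)^2) = (\<Sum>u<n. \<Sum>v<n. (x u - x v)^2)"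
    using sum_squared_differences[of x "{..<n}"] by simp
  also have "\<dots> \<le> (\<Sum>u<n. \<Sum>v<n. \<Sum>e\<in>E. edge_energy x e * pair_load n E \<alpha> e u v)"
    using pair_difference_bound[OF sg pw] by (intro sum_mono) auto
  also have "\<dots> = (\<Sum>e\<in>E. edge_energy x e * (2 * cgs_score n E \<alpha> e))"
    by (subst sum.swap, subst (2) sum.swap) (simp add: cgs_score_pair_load sum_distrib_left)
  also have "\<dots> \<le> (\<Sum>e\<in>E. edge_energy x e * (2 * cgs_max n E \<alpha>))"
    using score_le edge_energy_nonneg by (intro sum_mono mult_left_mono) auto
  also have "\<dots> = 2 * (cgs_max n E \<alpha> * (\<Sum>e\<in>E. edge_energy x e))"
    by (simp add: sum_distrib_left sum_distrib_right mult_ac)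
  finally show ?thesis by simp
qed

text \<open>C_max is positive: test the inequality with the indicator vector of vertex 0.\<close>
lemma cgs_max_pos:
  assumes n: "n \<ge> 2" and sg: "simple_graph n E" and pw: "path_weighting n E \<alpha>"
  shows "cgs_max n E \<alpha> > 0"
proof -
  define x where "x i = (if i = 0 then 1 else 0::real)" for i :: nat
  have "(x i)^2 = x i" for i unfolding x_def by simp
  moreover have "(\<Sum>i<n. x i) = 1" using n unfolding x_def by (simp add: sum.If_cases)
  ultimately have "(\<Sum>i<n. x i) = 1" "(\<Sum>i<n. (x i)^2) = 1" by simp_all
  then have "1 \<le> cgs_max n E \<alpha> * (\<Sum>e\<in>E. edge_energy x e)"
    using cgs_energy_inequality[OF sg pw, of x] n by simp
  moreover have "(\<Sum>e\<in>E. edge_energy x e) \<ge> 0" by (intro sum_nonneg edge_energy_nonneg)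
  ultimately show ?thesis by (metis mult_nonpos_nonneg not_less not_one_le_zero order_trans)
qed

theorem theorem2:
  fixes n :: nat and E :: "nat set set" and \<alpha> :: "nat \<Rightarrow> nat \<Rightarrow> nat list \<Rightarrow> real"
  assumes "n \<ge> 2" and "simple_graph n E" and "connected_graph n E"
    and "path_weighting n E \<alpha>"
  shows "lambda2 n E \<ge> real n / cgs_max n E \<alpha>"
proof -
  note n = assms(1) and sg = assms(2) and pw = assms(4)
  have form: "real n * (\<Sum>i<n. (x i)^2) - (\<Sum>i<n. x i)^2
      \<le> cgs_max n E \<alpha> * (\<Sum>i<n. \<Sum>j<n. laplacian n E $$ (i,j) * x i * x j)" for x
    using cgs_energy_inequality[OF sg pw, of x] laplacian_quadratic_form[OF sg, of x] by simp
  have "real n / cgs_max n E \<alpha> \<le> sorted_list_of_multiset (proots (char_poly (laplacian n E))) ! 1"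
    by (rule second_eigenvalue_bound[OF laplacian_carrier laplacian_symmetric laplacian_row_sum
          n cgs_max_pos[OF n sg pw] form])
  then show ?thesis unfolding lambda2_def lap_eigenvalues_def .
qed

end
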